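(* Let $\mu\ge 0$. Then, for $y>0$ and $x\ge 0$: (i) $\dfrac{\partial^2 Q_{\mu}(x,y)}{\partial x^2}\le 0$ whenever $0<y\le \mu+1$ and $x\ge 0$, with equality only for $x=0$, $y=\mu+1$; (ii) $\dfrac{\partial^2 Q_{\mu}(x,y)}{\partial x^2}<0$ whenever $x>y-\mu-\tfrac12$; (iii) $\dfrac{\partial^2 Q_{\mu}(x,y)}{\partial x^2}>0$ whenever $x<y-\mu-1$.
   Context: For real $\mu$, $x>0$, $y\ge 0$, the generalized Marcum $Q$-function is $Q_{\mu}(x,y)=x^{\frac12(1-\mu)}\int_y^{\infty} t^{\frac12(\mu-1)}e^{-t-x}I_{\mu-1}(2\sqrt{xt})\,dt$, where $I_\nu$ is the modified Bessel function of the first kind; at $x=0$ it is defined by continuity, $Q_\mu(0,y)=\Gamma(\mu,y)/\Gamma(\mu)$ (the regularized upper incomplete gamma function), and derivatives at $x=0$ are one-sided. *)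

theory Defs
  imports "HOL-Analysis.Analysis"
begin

text \<open>Modified Bessel function of the first kind, real order nu, via its power series
  I_nu(z) = sum_k (z/2)^(2k+nu) / (k! Gamma(k+nu+1)); 1/Gamma is rGamma (zero at poles).\<close>
definition besselI :: "real \<Rightarrow> real \<Rightarrow> real" where
  "besselI nu z = (\<Sum>k. (z / 2) powr (2 * real k + nu) * rGamma (real k + nu + 1) / fact k)"

definition reg_upper_gamma :: "real \<Rightarrow> real \<Rightarrow> real" where
  "reg_upper_gamma a y = rGamma a * integral {y..} (\<lambda>t. t powr (a - 1) * exp (- t))"

definition marcum_Q :: "real \<Rightarrow> real \<Rightarrow> real \<Rightarrow> real" where
  "marcum_Q mu x y =
     (if x = 0 then reg_upper_gamma mu y
      else x powr ((1 - mu) / 2) *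
           integral {y..} (\<lambda>t. t powr ((mu - 1) / 2) * exp (- t - x) *
                               besselI (mu - 1) (2 * sqrt (x * t))))"

definition marcum_Q_dx :: "real \<Rightarrow> real \<Rightarrow> real \<Rightarrow> real" where
  "marcum_Q_dx mu y x =
     (THE D. ((\<lambda>s. marcum_Q mu s y) has_real_derivative D) (at x within {0..}))"

definition marcum_Q_dxx :: "real \<Rightarrow> real \<Rightarrow> real \<Rightarrow> real" where
  "marcum_Q_dxx mu y x =
     (THE D. ((\<lambda>s. marcum_Q_dx mu y s) has_real_derivative D) (at x within {0..}))"

end

theory Submission
  imports Defs "HOL-Real_Asymp.Real_Asymp"
begin

text \<open>Expanding the Bessel function and integrating termwise gives
  \<open>Q\<^sub>\<mu>(x, y) = e\<^sup>-\<^sup>x \<Sum>\<^sub>k Q\<^sub>\<mu>\<^sub>+\<^sub>k(0, y) x\<^sup>k / k!\<close>. Since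
  \<open>Q\<^sub>a\<^sub>+\<^sub>1(0, y) - Q\<^sub>a(0, y) = y\<^sup>a e\<^sup>-\<^sup>y / \<Gamma>(a + 1)\<close>, differentiation yields
  \<open>\<partial>\<^sub>x Q = e\<^sup>-\<^sup>x\<^sup>-\<^sup>y y\<^sup>\<mu> G\<^sub>\<mu>\<^sub>+\<^sub>1(xy)\<close> and
  \<open>\<partial>\<^sub>x\<^sup>2 Q = e\<^sup>-\<^sup>x\<^sup>-\<^sup>y y\<^sup>\<mu> (y G\<^sub>\<mu>\<^sub>+\<^sub>2(xy) - G\<^sub>\<mu>\<^sub>+\<^sub>1(xy))\<close>, where
  \<open>G\<^sub>b(z) = \<Sum>\<^sub>k z\<^sup>k / (k! \<Gamma>(k + b))\<close>. Part (i) can be read off termwise from the power series of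
  the last factor. For (ii) and (iii) the ratio \<open>G\<^sub>b\<^sub>+\<^sub>1/G\<^sub>b\<close> is compared with \<open>1/y\<close> through the sign of
  \<open>R(z) = z G\<^sub>b\<^sub>+\<^sub>1\<^sup>2 + c G\<^sub>b G\<^sub>b\<^sub>+\<^sub>1 - G\<^sub>b\<^sup>2\<close>, which never changes on \<open>[0, \<infinity>)\<close>: at a positive
  zero of \<open>R\<close> the recurrence \<open>z G\<^sub>b\<^sub>+\<^sub>2 = G\<^sub>b - b G\<^sub>b\<^sub>+\<^sub>1\<close> turns \<open>z R'\<close> into a sum of terms that are
  all positive for \<open>c > b\<close> and all negative for \<open>0 < c \<le> b - 1/2\<close>.\<close>

section \<open>The normalised Bessel series\<close>

lemma rGamma_real_pos: "x > 0 \<Longrightarrow> rGamma x > (0::real)"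
  by (simp add: rGamma_inverse_Gamma)

lemma rGamma_real_nonneg: "x \<ge> 0 \<Longrightarrow> rGamma x \<ge> (0::real)"
  using rGamma_real_pos[of x] by (cases "x = 0") auto

lemma Suc_divide_fact_Suc: "real (Suc k) / fact (Suc k) = 1 / (fact k :: real)"
  by (simp add: field_simps del: of_nat_Suc)

lemma diffs_divide_fact:
  "diffs (\<lambda>k. c k / fact k) = (\<lambda>k. c (Suc k) / (fact k :: real))"
  using Suc_divide_fact_Suc by (simp add: diffs_def field_simps del: of_nat_Suc fact_Suc)

text \<open>\<open>besselG b z = z powr ((1 - b) / 2) * besselI (b - 1) (2 * sqrt z)\<close> for \<open>z > 0\<close>,
  written as an entire power series in \<open>z\<close>.\<close>
definition besselG :: "real \<Rightarrow> real \<Rightarrow> real" where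
  "besselG b z = (\<Sum>k. rGamma (real k + b) / fact k * z ^ k)"

lemma summable_besselG:
  assumes "b \<ge> 0"
  shows "summable (\<lambda>k. rGamma (real k + b) / fact k * z ^ k)"
proof -
  obtain N :: nat where N: "real N \<ge> 2 * \<bar>z\<bar> + 1"
    using real_arch_simple by blast
  show ?thesis
  proof (rule summable_ratio_test[of "1/2" N])
    fix n assume "n \<ge> N"
    then have "real n \<ge> 2 * \<bar>z\<bar> + 1"
      using N by (meson of_nat_le_iff order_trans)
    moreover have "0 \<le> (real n + b - 1) * (real n + 1)"
      using calculation assms by simp
    ultimately have n: "2 * \<bar>z\<bar> \<le> (real n + b) * (real n + 1)"
      by (simp add: algebra_simps)
    define r where "r = rGamma (real n + b + 1) * (\<bar>z\<bar> ^ n / fact n)"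
    have "r \<ge> 0"
      unfolding r_def using assms by (simp add: rGamma_real_nonneg)
    have "norm (rGamma (real (Suc n) + b) / fact (Suc n) * z ^ Suc n) = r * \<bar>z\<bar> / (real n + 1)"
      unfolding r_def by (simp add: abs_mult power_abs field_simps add_ac rGamma_real_nonneg assms)
    also have "\<dots> \<le> 1/2 * ((real n + b) * r)"
      using mult_left_mono[OF n \<open>r \<ge> 0\<close>] by (simp add: field_simps)
    also have "(real n + b) * r = norm (rGamma (real n + b) / fact n * z ^ n)"
      unfolding r_def using rGamma_plus1[of "real n + b"] assms
      by (simp add: abs_mult power_abs rGamma_real_nonneg add_ac)
    finally show "norm (rGamma (real (Suc n) + b) / fact (Suc n) * z ^ Suc n)
        \<le> 1/2 * norm (rGamma (real n + b) / fact n * z ^ n)" .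
  qed simp
qed

lemma besselG_has_real_derivative:
  assumes "b \<ge> 0"
  shows "(besselG b has_real_derivative besselG (b + 1) z) (at z)"
  using termdiffs_strong_converges_everywhere[OF summable_besselG[OF assms]]
  unfolding diffs_divide_fact besselG_def[abs_def] by (simp add: add_ac)

lemma besselG_0 [simp]: "besselG b 0 = rGamma b"
  unfolding besselG_def using powser_zero[of "\<lambda>k. rGamma (real k + b) / fact k"] by simp

lemma besselG_pos:
  assumes "b > 0" "z \<ge> 0"
  shows "besselG b z > 0"
  unfolding besselG_def using assms summable_besselG[of b z]
  by (intro suminf_pos2[where i=0]) (auto simp: rGamma_real_nonneg rGamma_real_pos)

lemma besselG_recurrence:
  assumes "b \<ge> 0"
  shows "z * besselG (b + 2) z + b * besselG (b + 1) z = besselG b z"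
proof -
  \<comment> \<open>\<open>rGamma (k + b) = (k + b) rGamma (k + b + 1)\<close>; the part with factor \<open>k\<close> is a shifted series\<close>
  define T where "T k = rGamma (real k + b + 1) * real k / fact k * z ^ k" for k
  have "T (Suc k) = z * (rGamma (real k + (b + 2)) / fact k * z ^ k)" for k
  proof -
    have "T (Suc k) = rGamma (real k + (b + 2)) * (real (Suc k) / fact (Suc k)) * z ^ Suc k"
      unfolding T_def of_nat_Suc by (simp add: algebra_simps del: fact_Suc)
    then show ?thesis
      unfolding Suc_divide_fact_Suc by simp
  qed
  then have "(\<lambda>k. T (Suc k)) = (\<lambda>k. z * (rGamma (real k + (b + 2)) / fact k * z ^ k))"
    by simp
  moreover have "(\<lambda>k. z * (rGamma (real k + (b + 2)) / fact k * z ^ k)) sums (z * besselG (b + 2) z)"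
    unfolding besselG_def using assms by (intro sums_mult summable_sums summable_besselG) simp
  ultimately have "T sums (z * besselG (b + 2) z)"
    using sums_Suc_iff[of T] by (simp add: T_def)
  moreover have "(\<lambda>k. b * (rGamma (real k + (b + 1)) / fact k * z ^ k)) sums (b * besselG (b + 1) z)"
    unfolding besselG_def using assms by (intro sums_mult summable_sums summable_besselG) simp
  ultimately have "(\<lambda>k. T k + b * (rGamma (real k + (b + 1)) / fact k * z ^ k))
      sums (z * besselG (b + 2) z + b * besselG (b + 1) z)"
    by (rule sums_add)
  moreover have "T k + b * (rGamma (real k + (b + 1)) / fact k * z ^ k)
      = rGamma (real k + b) / fact k * z ^ k" for k
  proof -
    have "rGamma (real k + b) = (real k + b) * rGamma (real k + (b + 1))"
      using rGamma_plus1[of "real k + b"] by (simp add: add_ac)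
    then show ?thesis
      unfolding T_def by (simp add: field_simps add_ac)
  qed
  ultimately show ?thesis
    unfolding besselG_def by (simp add: sums_iff)
qed

lemma besselI_eq_besselG:
  assumes "w > 0" "b \<ge> 0"
  shows "besselI (b - 1) (2 * sqrt w) = w powr ((b - 1) / 2) * besselG b w"
proof -
  have "(2 * sqrt w / 2) powr (2 * real k + (b - 1)) = w powr ((b - 1) / 2) * w ^ k" for k
  proof -
    have "(2 * sqrt w / 2) powr (2 * real k + (b - 1)) = (w powr (1/2)) powr (2 * real k + (b - 1))"
      using assms by (simp add: powr_half_sqrt)
    also have "\<dots> = w powr (real k + (b - 1) / 2)"
      by (simp add: powr_powr field_simps)
    finally show ?thesis
      using assms by (simp add: powr_add powr_realpow)
  qed
  then have "besselI (b - 1) (2 * sqrt w)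
      = (\<Sum>k. w powr ((b - 1) / 2) * (rGamma (real k + b) / fact k * w ^ k))"
    unfolding besselI_def by (simp add: field_simps)
  also have "\<dots> = w powr ((b - 1) / 2) * besselG b w"
    unfolding besselG_def by (rule suminf_mult) (rule summable_besselG[OF assms(2)])
  finally show ?thesis .
qed

section \<open>A Riccati-type bound for Bessel ratios\<close>

lemma first_nonpos_is_zero:
  fixes f :: "real \<Rightarrow> real"
  assumes cont: "continuous_on {0..z} f" and "f 0 > 0" "f z \<le> 0" "z \<ge> 0"
  obtains m where "0 < m" "m \<le> z" "f m = 0" "\<And>t. 0 \<le> t \<Longrightarrow> t < m \<Longrightarrow> f t > 0"
proof -
  define S where "S = {0..z} \<inter> f -` {..0}"
  have "z \<in> S" "bdd_below S"
    using assms unfolding S_def by auto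
  moreover have "closed S"
    unfolding S_def using cont by (intro continuous_closed_preimage) auto
  ultimately have "Inf S \<in> S"
    by (intro closed_contains_Inf) auto
  define m where "m = Inf S"
  have below: "f t > 0" if "0 \<le> t" "t < m" for t
  proof (rule ccontr)
    assume "\<not> f t > 0"
    then have "t \<in> S"
      using that \<open>Inf S \<in> S\<close> unfolding S_def m_def by auto
    then have "m \<le> t"
      unfolding m_def by (rule cInf_lower) fact
    with that show False by simp
  qed
  have m: "0 \<le> m" "m \<le> z" "f m \<le> 0"
    using \<open>Inf S \<in> S\<close> unfolding S_def m_def by auto
  with \<open>f 0 > 0\<close> have "0 < m"
    by (cases "m = 0") auto
  have "f m = 0"
  proof (rule ccontr)
    assume "f m \<noteq> 0"
    with m have "f m < 0" by simp
    then obtain t where "0 \<le> t" "t \<le> m" "f t = 0"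
      using IVT2'[of f m 0 0] \<open>f 0 > 0\<close> m continuous_on_subset[OF cont] by fastforce
    with below[of t] \<open>f m < 0\<close> show False
      by (cases "t = m") auto
  qed
  with \<open>0 < m\<close> m below show ?thesis
    using that by blast
qed

lemma pos_on_nonneg_if_upcrossings:
  fixes f f' :: "real \<Rightarrow> real"
  assumes deriv: "\<And>t. (f has_real_derivative f' t) (at t)"
    and "f 0 > 0"
    and upcrossing: "\<And>t. t > 0 \<Longrightarrow> f t = 0 \<Longrightarrow> f' t > 0"
    and "z \<ge> 0"
  shows "f z > 0"
proof (rule ccontr)
  assume "\<not> f z > 0"
  moreover have "continuous_on {0..z} f"
    using deriv by (meson DERIV_continuous continuous_at_imp_continuous_on)
  ultimately obtain m where m: "0 < m" "f m = 0" and below: "\<And>t. 0 \<le> t \<Longrightarrow> t < m \<Longrightarrow> f t > 0"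
    using first_nonpos_is_zero \<open>f 0 > 0\<close> \<open>z \<ge> 0\<close> by (metis not_less)
  obtain e where "e > 0" and e: "\<And>h. h > 0 \<Longrightarrow> h < e \<Longrightarrow> f (m - h) < f m"
    using DERIV_pos_inc_left[OF deriv upcrossing[OF m]] by blast
  define h where "h = min (e/2) (m/2)"
  have "h > 0" "h < e" "h \<le> m/2"
    using \<open>e > 0\<close> m by (auto simp: h_def)
  then show False
    using e[of h] below[of "m - h"] m by auto
qed

text \<open>For \<open>r = besselG (b + 1) z / besselG b z\<close> the sign of \<open>bessel_riccati b c z\<close> is that of
  \<open>z r\<^sup>2 + c r - 1\<close>; it encodes bounds for this Bessel ratio.\<close>
definition bessel_riccati :: "real \<Rightarrow> real \<Rightarrow> real \<Rightarrow> real" where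
  "bessel_riccati b c z = z * (besselG (b + 1) z)\<^sup>2 + c * besselG b z * besselG (b + 1) z - (besselG b z)\<^sup>2"

definition bessel_riccati_deriv :: "real \<Rightarrow> real \<Rightarrow> real \<Rightarrow> real" where
  "bessel_riccati_deriv b c z = (besselG (b + 1) z)\<^sup>2 + 2 * z * besselG (b + 1) z * besselG (b + 2) z
     + c * ((besselG (b + 1) z)\<^sup>2 + besselG b z * besselG (b + 2) z) - 2 * besselG b z * besselG (b + 1) z"

lemma bessel_riccati_has_real_derivative:
  assumes "b \<ge> 0"
  shows "(bessel_riccati b c has_real_derivative bessel_riccati_deriv b c z) (at z)"
proof -
  have G: "(besselG b has_real_derivative besselG (b + 1) z) (at z)"
    "(besselG (b + 1) has_real_derivative besselG (b + 2) z) (at z)"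
    using besselG_has_real_derivative[of b z] besselG_has_real_derivative[of "b + 1" z] assms
    by (simp_all add: add.assoc)
  show ?thesis
    unfolding bessel_riccati_def[abs_def] bessel_riccati_deriv_def
    by (rule derivative_eq_intros G refl | simp)+ (simp add: algebra_simps power2_eq_square)
qed

lemma bessel_riccati_0: "bessel_riccati b c 0 = rGamma b * rGamma (b + 1) * (c - b)"
  using rGamma_plus1[of b] unfolding bessel_riccati_def by (simp add: algebra_simps power2_eq_square)

text \<open>At a zero, the recurrence for \<open>besselG\<close> eliminates \<open>besselG (b + 2)\<close> from the derivative.\<close>
lemma bessel_riccati_deriv_at_zero:
  assumes "b \<ge> 0" and "bessel_riccati b c z = 0"
  shows "z * bessel_riccati_deriv b c z
    = z * (besselG (b + 1) z)\<^sup>2 * (1 - 2 * b + 2 * c) + c * (c - b) * besselG b z * besselG (b + 1) z"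
proof -
  define A B C where "A = besselG b z" and "B = besselG (b + 1) z" and "C = besselG (b + 2) z"
  have rec: "z * C = A - b * B"
    using besselG_recurrence[OF assms(1), of z] unfolding A_def B_def C_def by simp
  have zero: "A\<^sup>2 = z * B\<^sup>2 + c * A * B"
    using assms(2) unfolding bessel_riccati_def A_def B_def by simp
  have "z * bessel_riccati_deriv b c z
      = z * B\<^sup>2 + 2 * z * B * (z * C) + c * z * B\<^sup>2 + c * A * (z * C) - 2 * z * A * B"
    unfolding bessel_riccati_deriv_def A_def B_def C_def by (simp add: algebra_simps power2_eq_square)
  also have "\<dots> = z * B\<^sup>2 * (1 - 2 * b + 2 * c) + c * (c - b) * A * B + c * (A\<^sup>2 - (z * B\<^sup>2 + c * A * B))"
    unfolding rec by (simp add: algebra_simps power2_eq_square)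
  also have "\<dots> = z * B\<^sup>2 * (1 - 2 * b + 2 * c) + c * (c - b) * A * B"
    unfolding zero by simp
  finally show ?thesis
    unfolding A_def B_def .
qed

lemma bessel_riccati_pos:
  assumes "b > 0" "c > b" "z \<ge> 0"
  shows "bessel_riccati b c z > 0"
proof (rule pos_on_nonneg_if_upcrossings[of "bessel_riccati b c" "bessel_riccati_deriv b c"])
  show "(bessel_riccati b c has_real_derivative bessel_riccati_deriv b c t) (at t)" for t
    using assms by (intro bessel_riccati_has_real_derivative) simp
  show "bessel_riccati b c 0 > 0"
    unfolding bessel_riccati_0 using assms by (simp add: rGamma_real_pos)
  show "bessel_riccati_deriv b c t > 0" if "t > 0" "bessel_riccati b c t = 0" for t
  proof -
    have "besselG b t > 0" "besselG (b + 1) t > 0"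
      using assms that by (simp_all add: besselG_pos)
    then have "t * (besselG (b + 1) t)\<^sup>2 * (1 - 2 * b + 2 * c) > 0"
      and "c * (c - b) * besselG b t * besselG (b + 1) t > 0"
      using assms that by simp_all
    then have "t * bessel_riccati_deriv b c t > 0"
      unfolding bessel_riccati_deriv_at_zero[OF less_imp_le[OF assms(1)] that(2)] by linarith
    with \<open>t > 0\<close> show ?thesis
      by (simp add: zero_less_mult_iff)
  qed
qed fact

lemma bessel_riccati_neg:
  assumes "b > 0" "0 < c" "c \<le> b - 1/2" "z \<ge> 0"
  shows "bessel_riccati b c z < 0"
proof -
  have "- bessel_riccati b c z > 0"
  proof (rule pos_on_nonneg_if_upcrossings[of "\<lambda>t. - bessel_riccati b c t" "\<lambda>t. - bessel_riccati_deriv b c t"])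
    show "((\<lambda>t. - bessel_riccati b c t) has_real_derivative - bessel_riccati_deriv b c t) (at t)" for t
      using assms by (intro derivative_intros bessel_riccati_has_real_derivative) simp
    show "- bessel_riccati b c 0 > 0"
      unfolding bessel_riccati_0 using assms by (simp add: rGamma_real_pos mult_pos_neg)
    show "- bessel_riccati_deriv b c t > 0" if "t > 0" "- bessel_riccati b c t = 0" for t
    proof -
      have zero: "bessel_riccati b c t = 0"
        using that by simp
      have "besselG b t > 0" "besselG (b + 1) t > 0"
        using assms that by (simp_all add: besselG_pos)
      then have "t * (besselG (b + 1) t)\<^sup>2 * (1 - 2 * b + 2 * c) \<le> 0"
        and "c * (c - b) * besselG b t * besselG (b + 1) t < 0"
        using assms that by (simp_all add: mult_nonneg_nonpos mult_pos_neg mult_neg_pos)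
      then have "t * bessel_riccati_deriv b c t < 0"
        unfolding bessel_riccati_deriv_at_zero[OF less_imp_le[OF assms(1)] zero] by linarith
      with \<open>t > 0\<close> show ?thesis
        by (simp add: mult_less_0_iff)
    qed
  qed fact
  then show ?thesis by simp
qed

section \<open>The regularised upper incomplete gamma function\<close>

lemma has_integral_Gamma_real:
  fixes a :: real
  shows "a > 0 \<Longrightarrow> ((\<lambda>t. t powr (a - 1) * exp (- t)) has_integral Gamma a) {0..}"
  using Gamma_integral_real[of a] by (simp add: exp_minus divide_inverse)

lemma upper_gamma_integrand_absolutely_integrable:
  fixes a y :: real
  assumes "a > 0" "y \<ge> 0"
  shows "(\<lambda>t. t powr (a - 1) * exp (- t)) absolutely_integrable_on {y..}"
proof (rule set_integrable_subset)
  show "(\<lambda>t. t powr (a - 1) * exp (- t)) absolutely_integrable_on {0..}"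
    using has_integral_Gamma_real[OF assms(1)]
    by (intro nonnegative_absolutely_integrable_1) (auto simp: integrable_on_def)
qed (use assms in auto)

lemma upper_gamma_integrand_integrable:
  fixes a y :: real
  shows "a > 0 \<Longrightarrow> y \<ge> 0 \<Longrightarrow> (\<lambda>t. t powr (a - 1) * exp (- t)) integrable_on {y..}"
  using upper_gamma_integrand_absolutely_integrable absolutely_integrable_on_def by blast

lemma upper_gamma_integral_le_Gamma:
  fixes a y :: real
  assumes "a > 0" "y \<ge> 0"
  shows "integral {y..} (\<lambda>t. t powr (a - 1) * exp (- t)) \<le> Gamma a"
proof -
  have "integral {y..} (\<lambda>t. t powr (a - 1) * exp (- t)) \<le> integral {0..} (\<lambda>t. t powr (a - 1) * exp (- t))"
    using assms has_integral_Gamma_real[OF assms(1)] upper_gamma_integrand_integrable[OF assms]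
    by (intro integral_subset_le) (auto simp: integrable_on_def)
  also have "\<dots> = Gamma a"
    using has_integral_Gamma_real[OF assms(1)] by (rule integral_unique)
  finally show ?thesis .
qed

lemma reg_upper_gamma_0 [simp]: "reg_upper_gamma 0 y = 0"
  by (simp add: reg_upper_gamma_def)

lemma reg_upper_gamma_nonneg:
  assumes "a \<ge> 0" "y \<ge> 0"
  shows "reg_upper_gamma a y \<ge> 0"
  using assms upper_gamma_integrand_integrable[of a y]
  unfolding reg_upper_gamma_def
  by (cases "a = 0") (auto intro!: mult_nonneg_nonneg Henstock_Kurzweil_Integration.integral_nonneg
        simp: rGamma_real_nonneg)

lemma reg_upper_gamma_le_1:
  assumes "a \<ge> 0" "y \<ge> 0"
  shows "reg_upper_gamma a y \<le> 1"
proof (cases "a = 0")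
  case False
  with assms have "a > 0" by simp
  then have "reg_upper_gamma a y \<le> rGamma a * Gamma a"
    unfolding reg_upper_gamma_def using assms upper_gamma_integral_le_Gamma
    by (intro mult_left_mono) (auto simp: rGamma_real_nonneg)
  also have "rGamma a * Gamma a = 1"
    using Gamma_real_pos[OF \<open>a > 0\<close>] by (simp add: rGamma_inverse_Gamma)
  finally show ?thesis .
qed simp

lemma has_integral_reg_upper_gamma:
  assumes "a \<ge> 0" "y \<ge> 0"
  shows "((\<lambda>t. rGamma a * (t powr (a - 1) * exp (- t))) has_integral reg_upper_gamma a y) {y..}"
proof (cases "a = 0")
  case False
  with assms show ?thesis
    unfolding reg_upper_gamma_def using upper_gamma_integrand_integrable[of a y]
    by (intro has_integral_mult_right) (simp add: has_integral_integral)
qed simp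

lemma tendsto_integral_Icc_Ici:
  fixes f :: "real \<Rightarrow> real"
  assumes "f absolutely_integrable_on {a..}"
  shows "((\<lambda>b. integral {a..b} f) \<longlongrightarrow> integral {a..} f) at_top"
proof -
  have "set_lebesgue_integral lebesgue {a..b} f = integral {a..b} f" for b
    using set_integrable_subset[OF assms, of "{a..b}"]
    by (intro set_lebesgue_integral_eq_integral(2)) auto
  moreover have "set_lebesgue_integral lebesgue {a..} f = integral {a..} f"
    using assms by (rule set_lebesgue_integral_eq_integral(2))
  moreover have "((\<lambda>b. set_lebesgue_integral lebesgue {a..b} f) \<longlongrightarrow> set_lebesgue_integral lebesgue {a..} f) at_top"
    using assms by (intro tendsto_set_lebesgue_integral_at_top) auto
  ultimately show ?thesis
    by simp
qed

lemma upper_gamma_integral_Icc_plus1: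
  fixes a y Y :: real
  assumes "a > 0" "y > 0" "Y \<ge> y"
  shows "integral {y..Y} (\<lambda>t. t powr a * exp (- t)) - a * integral {y..Y} (\<lambda>t. t powr (a - 1) * exp (- t))
    = y powr a * exp (- y) - Y powr a * exp (- Y)"
proof -
  define h0 h1 where "h0 t = t powr (a - 1) * exp (- t)" and "h1 t = t powr a * exp (- t)" for t
  have integrable: "(\<lambda>t. t powr (b - 1) * exp (- t)) integrable_on {y..Y}" if "b > 0" for b
    using set_integrable_subset[OF upper_gamma_integrand_absolutely_integrable[OF that, of y]] assms
    by (auto simp: absolutely_integrable_on_def)
  have "((\<lambda>t. h1 t - a * h0 t) has_integral (- (Y powr a * exp (- Y)) - - (y powr a * exp (- y)))) {y..Y}"
  proof (rule fundamental_theorem_of_calculus[OF assms(3)])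
    fix t assume "t \<in> {y..Y}"
    with assms have "t > 0" by simp
    have "((\<lambda>t. - (t powr a * exp (- t))) has_real_derivative h1 t - a * h0 t) (at t within {y..Y})"
      unfolding h0_def h1_def by (rule derivative_eq_intros refl | use \<open>t > 0\<close> in simp)+
    then show "((\<lambda>t. - (t powr a * exp (- t))) has_vector_derivative h1 t - a * h0 t) (at t within {y..Y})"
      by (simp add: has_real_derivative_iff_has_vector_derivative)
  qed
  then have "integral {y..Y} (\<lambda>t. h1 t - a * h0 t) = y powr a * exp (- y) - Y powr a * exp (- Y)"
    by (simp add: integral_unique)
  moreover have "integral {y..Y} (\<lambda>t. h1 t - a * h0 t) = integral {y..Y} h1 - a * integral {y..Y} h0"
    using integrable[of a] integrable[of "a + 1"] assms unfolding h0_def h1_def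
    by (simp add: integral_diff integrable_on_cmult_left)
  ultimately show ?thesis
    unfolding h0_def h1_def by simp
qed

lemma upper_gamma_integral_plus1:
  fixes a y :: real
  assumes "a > 0" "y > 0"
  shows "integral {y..} (\<lambda>t. t powr a * exp (- t))
    = a * integral {y..} (\<lambda>t. t powr (a - 1) * exp (- t)) + y powr a * exp (- y)"
proof -
  define h0 h1 where "h0 t = t powr (a - 1) * exp (- t)" and "h1 t = t powr a * exp (- t)" for t
  have lim: "((\<lambda>Y. integral {y..Y} h1 - a * integral {y..Y} h0) \<longlongrightarrow> y powr a * exp (- y) - 0) at_top"
    using upper_gamma_integral_Icc_plus1[OF assms] unfolding h0_def h1_def
    by (subst tendsto_cong[OF eventually_mono[OF eventually_ge_at_top[of y]]])
      (auto intro!: tendsto_intros, real_asymp)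
  moreover have "((\<lambda>Y. integral {y..Y} h1 - a * integral {y..Y} h0)
      \<longlongrightarrow> integral {y..} h1 - a * integral {y..} h0) at_top"
    unfolding h0_def h1_def using assms upper_gamma_integrand_absolutely_integrable[of "a + 1" y]
    by (intro tendsto_intros tendsto_integral_Icc_Ici upper_gamma_integrand_absolutely_integrable) auto
  ultimately have "integral {y..} h1 - a * integral {y..} h0 = y powr a * exp (- y)"
    using tendsto_unique[OF _ lim] by simp
  then show ?thesis
    unfolding h0_def h1_def by simp
qed

lemma reg_upper_gamma_plus1:
  assumes "a \<ge> 0" "y > 0"
  shows "reg_upper_gamma (a + 1) y = reg_upper_gamma a y + y powr a * exp (- y) * rGamma (a + 1)"
proof (cases "a = 0")
  case True
  have "((\<lambda>t. exp (- 1 * t)) has_integral exp (- 1 * y) / 1) {y..}"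
    by (rule has_integral_exp_minus_to_infinity) simp
  then have "integral {y..} (\<lambda>t. t powr 0 * exp (- t)) = exp (- y)"
    using assms by (intro integral_unique) (auto elim: has_integral_eq[rotated])
  with True assms show ?thesis
    unfolding reg_upper_gamma_def by simp
next
  case False
  with assms have "a > 0" by simp
  have "reg_upper_gamma (a + 1) y = rGamma (a + 1) * integral {y..} (\<lambda>t. t powr a * exp (- t))"
    unfolding reg_upper_gamma_def by simp
  also have "\<dots> = rGamma (a + 1) * (a * integral {y..} (\<lambda>t. t powr (a - 1) * exp (- t)) + y powr a * exp (- y))"
    using upper_gamma_integral_plus1[OF \<open>a > 0\<close> assms(2)] by simp
  also have "\<dots> = reg_upper_gamma a y + y powr a * exp (- y) * rGamma (a + 1)"
    using rGamma_plus1[of a] unfolding reg_upper_gamma_def by (simp add: algebra_simps)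
  finally show ?thesis .
qed

section \<open>Derivatives of the Marcum \<open>Q\<close>-function\<close>

definition marcum_series :: "real \<Rightarrow> real \<Rightarrow> real \<Rightarrow> real" where
  "marcum_series mu y x = (\<Sum>k. reg_upper_gamma (real k + mu) y / fact k * x ^ k)"

lemma summable_marcum_series:
  assumes "mu \<ge> 0" "y \<ge> 0"
  shows "summable (\<lambda>k. reg_upper_gamma (real k + mu) y / fact k * x ^ k)"
proof (rule summable_comparison_test'[OF summable_exp[of "\<bar>x\<bar>"]])
  fix k :: nat
  have "0 \<le> reg_upper_gamma (real k + mu) y" "reg_upper_gamma (real k + mu) y \<le> 1"
    using assms by (simp_all add: reg_upper_gamma_nonneg reg_upper_gamma_le_1)
  then show "norm (reg_upper_gamma (real k + mu) y / fact k * x ^ k) \<le> inverse (fact k) * \<bar>x\<bar> ^ k"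
    by (simp add: abs_mult power_abs divide_inverse mult_left_le_one_le)
qed

lemma marcum_series_has_real_derivative:
  assumes "mu \<ge> 0" "y > 0"
  shows "(marcum_series mu y has_real_derivative
    marcum_series mu y x + exp (- y) * y powr mu * besselG (mu + 1) (x * y)) (at x)"
proof -
  define c where "c k = reg_upper_gamma (real k + mu) y" for k
  have summable: "summable (\<lambda>k. c k / fact k * x ^ k)" for x
    unfolding c_def using assms by (intro summable_marcum_series) auto
  have deriv: "(marcum_series mu y has_real_derivative (\<Sum>k. c (Suc k) / fact k * x ^ k)) (at x)"
    using termdiffs_strong_converges_everywhere[OF summable]
    unfolding diffs_divide_fact marcum_series_def[abs_def] c_def .
  have "(\<lambda>k. c (Suc k) / fact k * x ^ k) sums (\<Sum>k. c (Suc k) / fact k * x ^ k)"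
    using termdiff_converges_all[OF summable] by (simp add: diffs_divide_fact summable_sums)
  then have diff: "(\<lambda>k. c (Suc k) / fact k * x ^ k - c k / fact k * x ^ k)
      sums ((\<Sum>k. c (Suc k) / fact k * x ^ k) - marcum_series mu y x)"
    unfolding marcum_series_def c_def[symmetric] using summable_sums[OF summable] by (rule sums_diff)
  have terms: "c (Suc k) / fact k * x ^ k - c k / fact k * x ^ k
      = exp (- y) * y powr mu * (rGamma (real k + (mu + 1)) / fact k * (x * y) ^ k)" for k
  proof -
    have "c (Suc k) - c k = y powr (real k + mu) * exp (- y) * rGamma (real k + mu + 1)"
      unfolding c_def using reg_upper_gamma_plus1[of "real k + mu" y] assms by (simp add: add_ac)
    then show ?thesis
      using assms by (simp add: field_simps powr_add powr_realpow power_mult_distrib add_ac)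
  qed
  have "(\<lambda>k. exp (- y) * y powr mu * (rGamma (real k + (mu + 1)) / fact k * (x * y) ^ k))
      sums (exp (- y) * y powr mu * besselG (mu + 1) (x * y))"
    unfolding besselG_def using assms by (intro sums_mult summable_sums summable_besselG) simp
  from sums_unique2[OF diff[unfolded terms] this] have "(\<Sum>k. c (Suc k) / fact k * x ^ k)
      = marcum_series mu y x + exp (- y) * y powr mu * besselG (mu + 1) (x * y)"
    by simp
  with deriv show ?thesis
    by simp
qed

lemma marcum_integrand_sums:
  assumes "mu \<ge> 0" "x > 0" "t > 0"
  shows "(\<lambda>k. x powr ((mu - 1) / 2) * exp (- x) * x ^ k / fact k
      * (rGamma (real k + mu) * (t powr (real k + mu - 1) * exp (- t))))
    sums (t powr ((mu - 1) / 2) * exp (- t - x) * besselI (mu - 1) (2 * sqrt (x * t)))"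
proof -
  define p where "p = (mu - 1) / 2"
  define M where "M = t powr p * exp (- t - x) * (x * t) powr p"
  have terms: "M * (rGamma (real k + mu) / fact k * (x * t) ^ k)
      = x powr p * exp (- x) * x ^ k / fact k * (rGamma (real k + mu) * (t powr (real k + mu - 1) * exp (- t)))"
    for k
  proof -
    have "t powr p * t powr p * t ^ k = t powr (p + p + real k)"
      unfolding powr_add using assms by (simp add: powr_realpow)
    also have "p + p + real k = real k + mu - 1"
      unfolding p_def by (simp add: field_simps)
    finally show ?thesis
      unfolding M_def using assms
      by (simp add: powr_mult power_mult_distrib exp_diff exp_minus field_simps)
  qed
  have "(\<lambda>k. M * (rGamma (real k + mu) / fact k * (x * t) ^ k)) sums (M * besselG mu (x * t))"
    unfolding besselG_def using assms by (intro sums_mult summable_sums summable_besselG)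
  also have "M * besselG mu (x * t) = t powr p * exp (- t - x) * besselI (mu - 1) (2 * sqrt (x * t))"
    unfolding M_def p_def using besselI_eq_besselG[of "x * t" mu] assms by simp
  finally show ?thesis
    unfolding terms p_def .
qed

lemma marcum_Q_eq_series:
  assumes "mu \<ge> 0" "y > 0" "x \<ge> 0"
  shows "marcum_Q mu x y = exp (- x) * marcum_series mu y x"
proof (cases "x = 0")
  case True
  then show ?thesis
    unfolding marcum_Q_def marcum_series_def
    using powser_zero[of "\<lambda>k. reg_upper_gamma (real k + mu) y / fact k"] by simp
next
  case False
  with assms have "x > 0" by simp
  define p where "p = (mu - 1) / 2"
  define K where "K k = x powr p * exp (- x) * x ^ k / fact k" for k
  define v where "v k t = K k * (rGamma (real k + mu) * (t powr (real k + mu - 1) * exp (- t)))" for k t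
  define f where "f t = t powr p * exp (- t - x) * besselI (mu - 1) (2 * sqrt (x * t))" for t
  have v_nonneg: "v k t \<ge> 0" if "t \<in> {y..}" for k t
    unfolding v_def K_def using that assms by (simp add: rGamma_real_nonneg)
  have "(\<lambda>k. K k * reg_upper_gamma (real k + mu) y) sums (x powr p * exp (- x) * marcum_series mu y x)"
  proof -
    have "(\<lambda>k. x powr p * exp (- x) * (reg_upper_gamma (real k + mu) y / fact k * x ^ k))
        sums (x powr p * exp (- x) * marcum_series mu y x)"
      unfolding marcum_series_def using assms by (intro sums_mult summable_sums summable_marcum_series) auto
    then show ?thesis
      unfolding K_def by (simp add: field_simps)
  qed
  then have "(f has_integral (x powr p * exp (- x) * marcum_series mu y x)) {y..}"
    unfolding sums_def
  proof (rule has_integral_monotone_convergence_increasing[rotated 3])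
    show "((\<lambda>t. \<Sum>k<n. v k t) has_integral (\<Sum>k<n. K k * reg_upper_gamma (real k + mu) y)) {y..}" for n
      unfolding v_def using has_integral_reg_upper_gamma assms
      by (intro has_integral_sum has_integral_mult_right) auto
    show "(\<Sum>k<n. v k t) \<le> (\<Sum>k<Suc n. v k t)" if "t \<in> {y..}" for n t
      using v_nonneg[OF that, of n] by simp
    show "(\<lambda>n. \<Sum>k<n. v k t) \<longlonglongrightarrow> f t" if "t \<in> {y..}" for t
      using marcum_integrand_sums[of mu x t] that assms \<open>x > 0\<close>
      unfolding sums_def v_def K_def f_def p_def by simp
  qed
  moreover have "(1 - mu) / 2 + p = 0"
    unfolding p_def by (simp add: field_simps)
  then have "x powr ((1 - mu) / 2) * x powr p = 1"
    using \<open>x > 0\<close> by (simp add: powr_add[symmetric])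
  ultimately show ?thesis
    using False unfolding marcum_Q_def f_def p_def
    by (simp add: integral_unique mult.assoc[symmetric])
qed

lemma at_within_Ici_nontrivial:
  assumes "x \<ge> (0::real)"
  shows "at x within {0..} \<noteq> bot"
proof -
  have "x islimpt {x..x + 1}"
    by simp
  then have "x islimpt {0..}"
    by (rule islimpt_subset) (use assms in auto)
  then show ?thesis
    by (simp add: trivial_limit_within)
qed

lemma the_real_derivative_eqI:
  assumes "(f has_real_derivative D) (at x within S)" "at x within S \<noteq> bot"
  shows "(THE D. (f has_real_derivative D) (at x within S)) = D"
  using assms has_field_derivative_unique by blast

lemma marcum_Q_has_real_derivative:
  assumes "mu \<ge> 0" "y > 0" "x \<ge> 0"
  shows "((\<lambda>s. marcum_Q mu s y) has_real_derivative exp (- x - y) * y powr mu * besselG (mu + 1) (x * y))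
    (at x within {0..})"
proof (rule has_field_derivative_transform_within[where d=1])
  have "((\<lambda>s. exp (- s) * marcum_series mu y s) has_real_derivative
      - exp (- x) * marcum_series mu y x
      + exp (- x) * (marcum_series mu y x + exp (- y) * y powr mu * besselG (mu + 1) (x * y))) (at x)"
    by (rule derivative_eq_intros marcum_series_has_real_derivative[OF assms(1,2)] refl | simp)+
  then show "((\<lambda>s. exp (- s) * marcum_series mu y s) has_real_derivative
      exp (- x - y) * y powr mu * besselG (mu + 1) (x * y)) (at x within {0..})"
    by (auto intro: has_field_derivative_at_within simp: algebra_simps exp_diff exp_minus field_simps)
qed (use assms marcum_Q_eq_series in auto)

lemma marcum_Q_dx_eq:
  assumes "mu \<ge> 0" "y > 0" "x \<ge> 0"
  shows "marcum_Q_dx mu y x = exp (- x - y) * y powr mu * besselG (mu + 1) (x * y)"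
  unfolding marcum_Q_dx_def
  by (rule the_real_derivative_eqI[OF marcum_Q_has_real_derivative[OF assms] at_within_Ici_nontrivial[OF assms(3)]])

definition marcum_dxx_factor :: "real \<Rightarrow> real \<Rightarrow> real \<Rightarrow> real" where
  "marcum_dxx_factor mu y x = y * besselG (mu + 2) (x * y) - besselG (mu + 1) (x * y)"

lemma marcum_Q_dx_has_real_derivative:
  assumes "mu \<ge> 0" "y > 0" "x \<ge> 0"
  shows "((\<lambda>s. marcum_Q_dx mu y s) has_real_derivative exp (- x - y) * y powr mu * marcum_dxx_factor mu y x)
    (at x within {0..})"
proof (rule has_field_derivative_transform_within[where d=1])
  have G: "(besselG (mu + 1) has_real_derivative besselG (mu + 2) z) (at z)" for z
    using besselG_has_real_derivative[of "mu + 1" z] assms by (simp add: add.assoc)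
  have "((\<lambda>s. exp (- s - y) * y powr mu * besselG (mu + 1) (s * y)) has_real_derivative
      exp (- x - y) * (- 1) * y powr mu * besselG (mu + 1) (x * y)
      + exp (- x - y) * y powr mu * (besselG (mu + 2) (x * y) * y)) (at x)"
    by (rule derivative_eq_intros DERIV_chain2[OF G] refl | simp)+
  then show "((\<lambda>s. exp (- s - y) * y powr mu * besselG (mu + 1) (s * y)) has_real_derivative
      exp (- x - y) * y powr mu * marcum_dxx_factor mu y x) (at x within {0..})"
    unfolding marcum_dxx_factor_def by (auto intro: has_field_derivative_at_within simp: algebra_simps)
qed (use assms marcum_Q_dx_eq in auto)

lemma marcum_Q_dxx_eq:
  assumes "mu \<ge> 0" "y > 0" "x \<ge> 0"
  shows "marcum_Q_dxx mu y x = exp (- x - y) * y powr mu * marcum_dxx_factor mu y x"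
  unfolding marcum_Q_dxx_def
  by (rule the_real_derivative_eqI[OF marcum_Q_dx_has_real_derivative[OF assms] at_within_Ici_nontrivial[OF assms(3)]])

section \<open>Sign of the second derivative\<close>

lemma marcum_dxx_factor_sums:
  assumes "mu \<ge> 0"
  shows "(\<lambda>k. rGamma (real k + mu + 2) * (y - real k - mu - 1) / fact k * (x * y) ^ k)
    sums marcum_dxx_factor mu y x"
proof -
  have "(\<lambda>k. y * (rGamma (real k + (mu + 2)) / fact k * (x * y) ^ k)
      - rGamma (real k + (mu + 1)) / fact k * (x * y) ^ k) sums marcum_dxx_factor mu y x"
    unfolding marcum_dxx_factor_def besselG_def using assms
    by (intro sums_diff sums_mult summable_sums summable_besselG) simp_all
  moreover have "y * (rGamma (real k + (mu + 2)) / fact k * (x * y) ^ k)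
      - rGamma (real k + (mu + 1)) / fact k * (x * y) ^ k
      = rGamma (real k + mu + 2) * (y - real k - mu - 1) / fact k * (x * y) ^ k" for k
  proof -
    have "rGamma (real k + (mu + 1)) = (real k + mu + 1) * rGamma (real k + mu + 2)"
      using rGamma_plus1[of "real k + mu + 1"] by (simp add: add_ac)
    then show ?thesis
      by (simp add: field_simps add_ac)
  qed
  ultimately show ?thesis
    by simp
qed

lemma marcum_dxx_factor_term_nonpos:
  assumes "mu \<ge> 0" "x \<ge> 0" "y > 0" "y \<le> mu + 1"
  shows "rGamma (real k + mu + 2) * (y - real k - mu - 1) / fact k * (x * y) ^ k \<le> 0"
  using assms
  by (simp add: rGamma_real_nonneg mult_nonneg_nonpos divide_nonpos_pos mult_nonpos_nonneg)

lemma marcum_dxx_factor_nonpos: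
  assumes "mu \<ge> 0" "x \<ge> 0" "y > 0" "y \<le> mu + 1"
  shows "marcum_dxx_factor mu y x \<le> 0"
  by (rule sums_le[OF marcum_dxx_factor_term_nonpos[OF assms] marcum_dxx_factor_sums[OF assms(1)] sums_zero])

lemma marcum_dxx_factor_eq_0_imp:
  assumes "mu \<ge> 0" "x \<ge> 0" "y > 0" "y \<le> mu + 1" "marcum_dxx_factor mu y x = 0"
  shows "x = 0 \<and> y = mu + 1"
proof -
  define t where "t k = rGamma (real k + mu + 2) * (y - real k - mu - 1) / fact k * (x * y) ^ k" for k
  have t: "t sums marcum_dxx_factor mu y x"
    unfolding t_def by (rule marcum_dxx_factor_sums[OF assms(1)])
  have t0: "t 0 = rGamma (mu + 2) * (y - mu - 1)"
    unfolding t_def by simp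
  show ?thesis
  proof (cases "x = 0")
    case True
    then have "marcum_dxx_factor mu y x = t 0"
      using sums_unique[OF t] powser_zero[of "\<lambda>k. rGamma (real k + mu + 2) * (y - real k - mu - 1) / fact k"]
      unfolding t_def by simp
    with True assms t0 rGamma_real_pos[of "mu + 2"] show ?thesis
      by simp
  next
    case False
    \<comment> \<open>all terms are \<open>\<le> 0\<close>, and the one with \<open>k = 1\<close> is strictly negative\<close>
    have "0 < (\<Sum>k. - t k)"
    proof (rule suminf_pos2[where i=1])
      show "summable (\<lambda>k. - t k)"
        using t by (intro summable_minus) (auto simp: sums_iff)
      show "0 \<le> - t k" for k
        unfolding t_def using marcum_dxx_factor_term_nonpos[OF assms(1-4)] by simp
      show "0 < - t 1"
        unfolding t_def using assms False rGamma_real_pos[of "mu + 3"]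
        by (simp add: mult_pos_neg mult_neg_pos add_ac)
    qed
    also have "(\<Sum>k. - t k) = - marcum_dxx_factor mu y x"
      using t by (simp add: sums_iff suminf_minus)
    finally show ?thesis
      using assms by simp
  qed
qed

lemma marcum_dxx_factor_neg:
  assumes "mu \<ge> 0" "x \<ge> 0" "y > 0" "x > y - mu - 1/2"
  shows "marcum_dxx_factor mu y x < 0"
proof (rule ccontr)
  define A B where "A = besselG (mu + 1) (x * y)" and "B = besselG (mu + 2) (x * y)"
  assume "\<not> marcum_dxx_factor mu y x < 0"
  then have "y * B \<ge> A"
    unfolding marcum_dxx_factor_def A_def B_def by simp
  have "A > 0" "B > 0"
    unfolding A_def B_def using assms by (simp_all add: besselG_pos)
  have "bessel_riccati (mu + 1) (mu + 1/2) (x * y) < 0"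
    using assms by (intro bessel_riccati_neg) auto
  then have "x * y * B\<^sup>2 + (mu + 1/2) * A * B < A\<^sup>2"
    unfolding bessel_riccati_def A_def B_def by (simp add: add.assoc)
  moreover have "x * B * A \<le> x * B * (y * B)" "A * A \<le> A * (y * B)"
    using \<open>y * B \<ge> A\<close> \<open>A > 0\<close> \<open>B > 0\<close> assms by (simp_all add: mult_left_mono)
  moreover have "y * (A * B) < (x + mu + 1/2) * (A * B)"
    using assms \<open>A > 0\<close> \<open>B > 0\<close> by (intro mult_strict_right_mono) auto
  ultimately show False
    by (simp add: algebra_simps power2_eq_square)
qed

lemma marcum_dxx_factor_pos:
  assumes "mu \<ge> 0" "x \<ge> 0" "y > 0" "x < y - mu - 1"
  shows "marcum_dxx_factor mu y x > 0"
proof (rule ccontr)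
  define A B where "A = besselG (mu + 1) (x * y)" and "B = besselG (mu + 2) (x * y)"
  assume "\<not> marcum_dxx_factor mu y x > 0"
  then have "y * B \<le> A"
    unfolding marcum_dxx_factor_def A_def B_def by simp
  have "A > 0" "B > 0"
    unfolding A_def B_def using assms by (simp_all add: besselG_pos)
  have "bessel_riccati (mu + 1) (y - x) (x * y) > 0"
    using assms by (intro bessel_riccati_pos) auto
  then have "x * y * B\<^sup>2 + (y - x) * A * B > A\<^sup>2"
    unfolding bessel_riccati_def A_def B_def by (simp add: add.assoc)
  moreover have "x * B * (y * B) \<le> x * B * A" "A * (y * B) \<le> A * A"
    using \<open>y * B \<le> A\<close> \<open>A > 0\<close> \<open>B > 0\<close> assms by (simp_all add: mult_left_mono)
  ultimately show False
    by (simp add: algebra_simps power2_eq_square)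
qed

theorem theorem1:
  fixes mu :: real
  assumes "mu \<ge> 0"
  shows "(\<forall>x y. 0 \<le> x \<and> 0 < y \<longrightarrow>
            ((\<lambda>s. marcum_Q mu s y) has_real_derivative marcum_Q_dx mu y x) (at x within {0..}) \<and>
            ((\<lambda>s. marcum_Q_dx mu y s) has_real_derivative marcum_Q_dxx mu y x) (at x within {0..}))
       \<and> (\<forall>x y. 0 \<le> x \<and> 0 < y \<and> y \<le> mu + 1 \<longrightarrow>
            marcum_Q_dxx mu y x \<le> 0 \<and> (marcum_Q_dxx mu y x = 0 \<longrightarrow> x = 0 \<and> y = mu + 1))
       \<and> (\<forall>x y. 0 \<le> x \<and> 0 < y \<and> x > y - mu - 1/2 \<longrightarrow> marcum_Q_dxx mu y x < 0)
       \<and> (\<forall>x y. 0 \<le> x \<and> 0 < y \<and> x < y - mu - 1 \<longrightarrow> marcum_Q_dxx mu y x > 0)"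
proof -
  have "((\<lambda>s. marcum_Q mu s y) has_real_derivative marcum_Q_dx mu y x) (at x within {0..}) \<and>
      ((\<lambda>s. marcum_Q_dx mu y s) has_real_derivative marcum_Q_dxx mu y x) (at x within {0..})"
    if "0 \<le> x" "0 < y" for x y
    using marcum_Q_has_real_derivative[OF assms that(2,1)] marcum_Q_dx_has_real_derivative[OF assms that(2,1)]
    by (simp add: marcum_Q_dx_eq[OF assms that(2,1)] marcum_Q_dxx_eq[OF assms that(2,1)])
  moreover have "marcum_Q_dxx mu y x \<le> 0 \<and> (marcum_Q_dxx mu y x = 0 \<longrightarrow> x = 0 \<and> y = mu + 1)"
    if "0 \<le> x" "0 < y" "y \<le> mu + 1" for x y
    using marcum_dxx_factor_nonpos[OF assms that] marcum_dxx_factor_eq_0_imp[OF assms that] that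
    by (simp add: marcum_Q_dxx_eq[OF assms that(2,1)] mult_nonneg_nonpos)
  moreover have "marcum_Q_dxx mu y x < 0" if "0 \<le> x" "0 < y" "x > y - mu - 1/2" for x y
    using marcum_dxx_factor_neg[OF assms that] that
    by (simp add: marcum_Q_dxx_eq[OF assms that(2,1)] mult_pos_neg)
  moreover have "marcum_Q_dxx mu y x > 0" if "0 \<le> x" "0 < y" "x < y - mu - 1" for x y
    using marcum_dxx_factor_pos[OF assms that] that
    by (simp add: marcum_Q_dxx_eq[OF assms that(2,1)])
  ultimately show ?thesis
    by blast
qed

end
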